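(* Let $p$ be an odd prime and $\lambda=(\lambda_1,\dots,\lambda_r)$ a BG-partition, and let $k=k(\lambda)$. Then the partition $\mu=(\lambda_1,\lambda_2,\dots,\lambda_k)$ is $p$-regular.
   Context: For a partition $\lambda$ (weakly decreasing sequence of positive integers), $\lambda'$ is its conjugate and $\lambda$ is self-conjugate if $\lambda=\lambda'$. $k(\lambda)=\max\{i:\lambda_i\ge i\}$. The hook length at $(i,j)$ is $h_{ij}=\lambda_i+\lambda'_j-i-j+1$. A BG-partition is a self-conjugate partition with $p\nmid h_{ii}$ for all $1\le i\le k(\lambda)$. A partition is $p$-regular if no nonzero part appears $p$ or more times. *)

theory Defs
  imports "HOL-Computational_Algebra.Primes"
begin

text \<open>Partitions are lists of positive naturals in weakly decreasing order;
  parts are indexed from 1, and parts beyond the length are 0.\<close>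

definition is_partition :: "nat list \<Rightarrow> bool" where
  "is_partition l \<longleftrightarrow> sorted_wrt (\<ge>) l \<and> (\<forall>x\<in>set l. 0 < x)"

definition part :: "nat list \<Rightarrow> nat \<Rightarrow> nat" where
  "part l i = (if 1 \<le> i \<and> i \<le> length l then l ! (i - 1) else 0)"

definition conjugate :: "nat list \<Rightarrow> nat list" where
  "conjugate l = map (\<lambda>j. length (filter (\<lambda>x. j \<le> x) l)) [1..<Suc (fold max l 0)]"

definition self_conjugate :: "nat list \<Rightarrow> bool" where
  "self_conjugate l \<longleftrightarrow> conjugate l = l"

definition kpart :: "nat list \<Rightarrow> nat" where
  "kpart l = Max ({0} \<union> {i. 1 \<le> i \<and> i \<le> length l \<and> i \<le> part l i})"

definition hook :: "nat list \<Rightarrow> nat \<Rightarrow> nat \<Rightarrow> int" where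
  "hook l i j = int (part l i) + int (part (conjugate l) j) - int i - int j + 1"

definition BG_partition :: "nat \<Rightarrow> nat list \<Rightarrow> bool" where
  "BG_partition p l \<longleftrightarrow> is_partition l \<and> self_conjugate l \<and>
     (\<forall>i. 1 \<le> i \<and> i \<le> kpart l \<longrightarrow> \<not> int p dvd hook l i i)"

definition p_regular :: "nat \<Rightarrow> nat list \<Rightarrow> bool" where
  "p_regular p l \<longleftrightarrow> (\<forall>x. 0 < x \<longrightarrow> count_list l x < p)"

end

theory Submission
  imports Defs
begin

text \<open>For a self-conjugate partition the diagonal hook lengths are \<open>2\<lambda>\<^sub>i - 2i + 1\<close>.
  If some part \<open>x\<close> occurred \<open>p\<close> times among \<open>\<lambda>\<^sub>1, \<dots>, \<lambda>\<^sub>k\<close>, it would occupy \<open>p\<close>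
  consecutive diagonal positions \<open>i\<close>, and as \<open>2\<close> is invertible modulo the odd
  number \<open>p\<close>, the values \<open>2x - 2i + 1\<close> would run through all residues modulo \<open>p\<close>;
  one of these hook lengths would then be divisible by \<open>p\<close>.\<close>

lemma kpart_le_length: "kpart l \<le> length l"
proof -
  let ?A = "{0} \<union> {i. 1 \<le> i \<and> i \<le> length l \<and> i \<le> part l i}"
  have "?A \<subseteq> {..length l}" by auto
  moreover from this have "Max ?A \<in> ?A"
    by (intro Max_in) (auto intro: finite_subset)
  ultimately show ?thesis unfolding kpart_def by blast
qed

lemma hook_diag_self_conjugate:
  assumes "self_conjugate l"
  shows "hook l i i = 2 * int (part l i) - 2 * int i + 1"
  using assms unfolding self_conjugate_def hook_def by simp

lemma odd_dvd_sub_double: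
  fixes p :: nat and c :: int
  assumes "odd p"
  obtains r where "r < p" "int p dvd c - 2 * int r"
proof -
  obtain m where p: "p = 2 * m + 1" using assms oddE by blast
  \<comment> \<open>\<open>m + 1\<close> is the inverse of \<open>2\<close> modulo \<open>p\<close>\<close>
  define r where "r = nat (c * (int m + 1) mod int p)"
  have "r < p" using p unfolding r_def by (simp add: nat_less_iff)
  moreover have "int p dvd c - 2 * int r"
  proof -
    define q where "q = c * (int m + 1) div int p"
    have "int r = c * (int m + 1) mod int p"
      using p unfolding r_def by simp
    then have "int r = c * (int m + 1) - q * int p"
      unfolding q_def by (simp add: minus_div_mult_eq_mod)
    then have "c - 2 * int r = int p * (2 * q - c)"
      using p by (simp add: algebra_simps)
    then show ?thesis by simp
  qed
  ultimately show ?thesis using that by blast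
qed

lemma sorted_wrt_ge_occurrences_consecutive:
  fixes xs :: "'a :: linorder list"
  assumes "sorted_wrt (\<ge>) xs"
  obtains a where "a + count_list xs x \<le> length xs"
    and "\<And>i. a \<le> i \<Longrightarrow> i < a + count_list xs x \<Longrightarrow> xs ! i = x"
proof -
  define S where "S = {i. i < length xs \<and> xs ! i = x}"
  have count: "count_list xs x = card S"
    unfolding count_list_eq_length_filter length_filter_conv_card S_def by metis
  have "finite S" unfolding S_def by simp
  show ?thesis
  proof (cases "S = {}")
    case True
    then show ?thesis using that[of 0] count by simp
  next
    case False
    define a where "a = Min S"
    define b where "b = Max S"
    have aS: "a \<in> S" and bS: "b \<in> S"
      unfolding a_def b_def using \<open>finite S\<close> False by auto
    have "{a..b} \<subseteq> S"
    proof
      fix i assume i: "i \<in> {a..b}"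
      with bS have "i < length xs" unfolding S_def by auto
      with i bS assms have "xs ! a \<ge> xs ! i" "xs ! i \<ge> xs ! b"
        unfolding S_def by (auto simp: sorted_wrt_iff_nth_less le_less)
      with aS bS \<open>i < length xs\<close> show "i \<in> S" unfolding S_def by auto
    qed
    moreover have "S \<subseteq> {a..b}"
      unfolding a_def b_def using \<open>finite S\<close> by auto
    ultimately have "S = {a..<b + 1}" by auto
    moreover have "a \<le> b" using \<open>S \<subseteq> {a..b}\<close> aS by auto
    ultimately have run: "a + count_list xs x = b + 1"
      unfolding count by simp
    show ?thesis
    proof (rule that)
      show "a + count_list xs x \<le> length xs" using run bS unfolding S_def by simp
      fix i assume "a \<le> i" "i < a + count_list xs x"
      with run \<open>S = {a..<b + 1}\<close> have "i \<in> S" by simp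
      then show "xs ! i = x" unfolding S_def by simp
    qed
  qed
qed

theorem lemma3p18:
  fixes p :: nat and l :: "nat list"
  assumes "prime p" and "odd p" and "BG_partition p l"
  shows "p_regular p (take (kpart l) l)"
  unfolding p_regular_def
proof (intro allI impI, rule ccontr)
  fix x :: nat
  let ?k = "kpart l"
  assume "\<not> count_list (take ?k l) x < p"
  then have "p \<le> count_list (take ?k l) x" by simp
  have "sorted_wrt (\<ge>) (take ?k l)"
    using assms(3) by (simp add: BG_partition_def is_partition_def sorted_wrt_take)
  then obtain a where run: "a + count_list (take ?k l) x \<le> length (take ?k l)"
    and run_x: "\<And>i. a \<le> i \<Longrightarrow> i < a + count_list (take ?k l) x \<Longrightarrow> take ?k l ! i = x"
    using sorted_wrt_ge_occurrences_consecutive by blast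
  obtain r where "r < p" and dvd: "int p dvd (2 * int x - 2 * int (a + 1) + 1) - 2 * int r"
    using odd_dvd_sub_double[OF assms(2)] .
  define j where "j = a + r + 1"
  have j: "1 \<le> j" "j \<le> ?k"
    using run \<open>r < p\<close> \<open>p \<le> count_list (take ?k l) x\<close> unfolding j_def by auto
  have "part l j = x"
    using run_x[of "a + r"] j kpart_le_length[of l] \<open>r < p\<close> \<open>p \<le> count_list (take ?k l) x\<close>
    unfolding part_def j_def by simp
  then have "hook l j j = 2 * int x - 2 * int (a + 1) + 1 - 2 * int r"
    using assms(3) by (simp add: BG_partition_def hook_diag_self_conjugate j_def)
  with dvd j show False using assms(3) unfolding BG_partition_def by auto
qed

end
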